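(* Let $(a,b,c,\lambda)\in(\mathbb F^\times)^4$ and let $O$ be a $\triangle_q$-submodule of $M_\lambda(a,b,c)$ with $m_0\notin O$. Then: (i) $m_0+O$ is a marginal weight vector of $M_\lambda(a,b,c)/O$ with weight $b\lambda^{-1}$; (ii) $m_0+O$ is a marginal weight vector of $M_\lambda(a,b,c)/O$ with weight $b^{-1}\lambda$ if and only if $b\lambda^{-1}=b^{-1}\lambda$, or $m_0+O$ and $m_1+O$ are linearly dependent.
   Context: $\mathbb F$ is an algebraically closed field and $q\in\mathbb F^\times$ a root of unity of order $d\notin\{1,2,4\}$. $\triangle_q$ is the unital associative $\mathbb F$-algebra with generators $A,B,C$ subject to: each of $A+\frac{qBC-q^{-1}CB}{q^2-q^{-2}}$, $B+\frac{qCA-q^{-1}AC}{q^2-q^{-2}}$, $C+\frac{qAB-q^{-1}BA}{q^2-q^{-2}}$ is central; $\alpha,\beta,\gamma$ are these times $q+q^{-1}$. For a $\triangle_q$-module $V$ and $\mu\in\mathbb F^\times$ let $V(\mu)=\{v\in V: Bv=(\mu+\mu^{-1})v\}$; a marginal weight vector of $V$ with weight $\mu$ is a nonzero $v\in V(\mu)$ that is an eigenvector of $(B-\mu q^2-\mu^{-1}q^{-2})A$. For $(a,b,c,\lambda)\in(\mathbb F^\times)^4$, $i\in\mathbb N$: $\theta_i=a\lambda^{-1}q^{2i}+a^{-1}\lambda q^{-2i}$, $\theta_i^*=b\lambda^{-1}q^{2i}+b^{-1}\lambda q^{-2i}$, $\varphi_i=a^{-1}b^{-1}\lambda q(q^i-q^{-i})(\lambda^{-1}q^{i-1}-\lambda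 q^{1-i})(q^{-i}-abc\lambda^{-1}q^{i-1})(q^{-i}-abc^{-1}\lambda^{-1}q^{i-1})$. $M_\lambda(a,b,c)$ is the $\triangle_q$-module with basis $\{m_i\}_{i\in\mathbb N}$, $(A-\theta_i)m_i=m_{i+1}$, $(B-\theta_i^* )m_i=\varphi_im_{i-1}$, with $\alpha,\beta,\gamma$ acting as $(b+b^{-1})(c+c^{-1})+(a+a^{-1})(\lambda q+\lambda^{-1}q^{-1})$, $(c+c^{-1})(a+a^{-1})+(b+b^{-1})(\lambda q+\lambda^{-1}q^{-1})$, $(a+a^{-1})(b+b^{-1})+(c+c^{-1})(\lambda q+\lambda^{-1}q^{-1})$. *)

theory Defs
  imports "HOL-Computational_Algebra.Polynomial"
begin

definition root_of_unity :: "'a::field \<Rightarrow> bool" where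
  "root_of_unity q \<longleftrightarrow> (\<exists>n>0. q ^ n = 1)"

definition unity_order :: "'a::field \<Rightarrow> nat" where
  "unity_order q = (LEAST n. n > 0 \<and> q ^ n = 1)"

definition theta :: "'a::field \<Rightarrow> 'a \<Rightarrow> 'a \<Rightarrow> nat \<Rightarrow> 'a" where
  "theta q a lam i = a / lam * q ^ (2*i) + lam / (a * q ^ (2*i))"

definition thetas :: "'a::field \<Rightarrow> 'a \<Rightarrow> 'a \<Rightarrow> nat \<Rightarrow> 'a" where
  "thetas q b lam i = b / lam * q ^ (2*i) + lam / (b * q ^ (2*i))"

definition phi :: "'a::field \<Rightarrow> 'a \<Rightarrow> 'a \<Rightarrow> 'a \<Rightarrow> 'a \<Rightarrow> nat \<Rightarrow> 'a" where
  "phi q a b c lam i =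
     lam / (a * b) * q * (q ^ i - inverse q ^ i)
     * (inverse lam * q ^ i / q - lam * q / q ^ i)
     * (inverse q ^ i - a * b * c / lam * q ^ i / q)
     * (inverse q ^ i - a * b / (c * lam) * q ^ i / q)"

text \<open>Elements of M_lambda(a,b,c) are represented by their coordinate
  sequences with respect to the basis m_0, m_1, ...: finitely supported
  functions nat => F.\<close>
definition fin_supp :: "(nat \<Rightarrow> 'a::zero) \<Rightarrow> bool" where
  "fin_supp v \<longleftrightarrow> finite {i. v i \<noteq> 0}"

definition basis_vec :: "nat \<Rightarrow> nat \<Rightarrow> 'a::{zero,one}" ("m") where
  "basis_vec j = (\<lambda>i. if i = j then 1 else 0)"

text \<open>Action of A: (A - theta_i) m_i = m_{i+1}.\<close>
definition actA :: "'a::field \<Rightarrow> 'a \<Rightarrow> 'a \<Rightarrow> (nat \<Rightarrow> 'a) \<Rightarrow> (nat \<Rightarrow> 'a)" where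
  "actA q a lam v = (\<lambda>i. theta q a lam i * v i + (if i = 0 then 0 else v (i - 1)))"

text \<open>Action of B: (B - theta*_i) m_i = phi_i m_{i-1}  (phi_0 = 0).\<close>
definition actB :: "'a::field \<Rightarrow> 'a \<Rightarrow> 'a \<Rightarrow> 'a \<Rightarrow> 'a \<Rightarrow> (nat \<Rightarrow> 'a) \<Rightarrow> (nat \<Rightarrow> 'a)" where
  "actB q a b c lam v = (\<lambda>i. thetas q b lam i * v i + phi q a b c lam (Suc i) * v (Suc i))"

definition gamma_val :: "'a::field \<Rightarrow> 'a \<Rightarrow> 'a \<Rightarrow> 'a \<Rightarrow> 'a \<Rightarrow> 'a" where
  "gamma_val q a b c lam =
     (a + inverse a) * (b + inverse b) + (c + inverse c) * (lam * q + inverse lam * inverse q)"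

text \<open>Action of C, forced by centrality of
  C + (qAB - q^{-1}BA)/(q^2-q^{-2}) = gamma/(q+q^{-1}).\<close>
definition actC :: "'a::field \<Rightarrow> 'a \<Rightarrow> 'a \<Rightarrow> 'a \<Rightarrow> 'a \<Rightarrow> (nat \<Rightarrow> 'a) \<Rightarrow> (nat \<Rightarrow> 'a)" where
  "actC q a b c lam v =
     (\<lambda>i. gamma_val q a b c lam / (q + inverse q) * v i
          - (q * actA q a lam (actB q a b c lam v) i
             - inverse q * actB q a b c lam (actA q a lam v) i) / (q^2 - inverse q ^ 2))"

text \<open>Submodules of M_lambda(a,b,c): subspaces (of finitely supported
  vectors) invariant under A, B, C (alpha, beta, gamma act as scalars).\<close>
definition is_submodule :: "'a::field \<Rightarrow> 'a \<Rightarrow> 'a \<Rightarrow> 'a \<Rightarrow> 'a \<Rightarrow> (nat \<Rightarrow> 'a) set \<Rightarrow> bool" where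
  "is_submodule q a b c lam U \<longleftrightarrow>
     (\<forall>v\<in>U. fin_supp v) \<and> (\<lambda>_. 0) \<in> U \<and>
     (\<forall>v\<in>U. \<forall>w\<in>U. (\<lambda>i. v i + w i) \<in> U) \<and>
     (\<forall>v\<in>U. \<forall>s. (\<lambda>i. s * v i) \<in> U) \<and>
     (\<forall>v\<in>U. actA q a lam v \<in> U) \<and>
     (\<forall>v\<in>U. actB q a b c lam v \<in> U) \<and>
     (\<forall>v\<in>U. actC q a b c lam v \<in> U)"

definition marginal_weight_quot ::
  "'a::field \<Rightarrow> 'a \<Rightarrow> 'a \<Rightarrow> 'a \<Rightarrow> 'a \<Rightarrow> (nat \<Rightarrow> 'a) set \<Rightarrow> 'a \<Rightarrow> (nat \<Rightarrow> 'a) \<Rightarrow> bool" where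
  "marginal_weight_quot q a b c lam U mu v \<longleftrightarrow>
     v \<notin> U \<and>
     (\<lambda>i. actB q a b c lam v i - (mu + inverse mu) * v i) \<in> U \<and>
     (\<exists>e. (\<lambda>i. (let w = actA q a lam v in
                 actB q a b c lam w i - (mu * q^2 + inverse mu * inverse q ^ 2) * w i)
               - e * v i) \<in> U)"

definition lin_dep_quot :: "(nat \<Rightarrow> 'a::field) set \<Rightarrow> (nat \<Rightarrow> 'a) \<Rightarrow> (nat \<Rightarrow> 'a) \<Rightarrow> bool" where
  "lin_dep_quot U v w \<longleftrightarrow> (\<exists>x y. (x \<noteq> 0 \<or> y \<noteq> 0) \<and> (\<lambda>i. x * v i + y * w i) \<in> U)"

end

theory Submission
  imports Defs
begin

text \<open>On m_0 both B and (B - mu q^2 - mu^{-1} q^{-2}) A act by explicit two-term formulas: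
  B m_0 = theta*_0 m_0, and theta*_0 = mu + mu^{-1} for both mu = b/lam and mu = lam/b, while
  (B - k) A m_0 is a multiple of m_0 plus (theta*_1 - k) m_1. For mu = b/lam the coefficient
  theta*_1 - k vanishes; for mu = lam/b it equals (b/lam - lam/b)(q^2 - q^{-2}), and
  q^2 \<noteq> q^{-2} because q^4 \<noteq> 1. Modulo a subspace not containing m_0, a vector
  e m_0 + d m_1 can be made to vanish for some e exactly when d = 0 or m_0, m_1 are dependent.\<close>

lemma root_of_unity_nonzero: "root_of_unity (q::'a::field) \<Longrightarrow> q \<noteq> 0"
  unfolding root_of_unity_def by (auto simp: power_0_left)

lemma power_four_ne_one:
  fixes q :: "'a::field"
  assumes "root_of_unity q" and "unity_order q \<notin> {1, 2, 4}"
  shows "q ^ 4 \<noteq> 1"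
proof
  assume q4: "q ^ 4 = 1"
  let ?P = "\<lambda>n::nat. n > 0 \<and> q ^ n = 1"
  have "unity_order q \<le> 4"
    unfolding unity_order_def by (rule Least_le) (simp add: q4)
  moreover have ord: "?P (unity_order q)"
    unfolding unity_order_def by (rule LeastI[of ?P 4]) (simp add: q4)
  ultimately have "unity_order q = 3"
    using assms(2) by auto
  with ord have "q ^ 3 = 1" by simp
  moreover have "q ^ 4 = q ^ 3 * q" by (simp add: eval_nat_numeral)
  ultimately have "q = 1" using q4 by simp
  then have "unity_order q \<le> 1"
    unfolding unity_order_def by (intro Least_le) simp
  with \<open>unity_order q = 3\<close> show False by simp
qed

lemma square_ne_inverse_square:
  fixes q :: "'a::field"
  assumes "q \<noteq> 0" and "q ^ 4 \<noteq> 1"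
  shows "q ^ 2 - inverse q ^ 2 \<noteq> 0"
proof
  assume "q ^ 2 - inverse q ^ 2 = 0"
  then have "q ^ 4 = inverse q ^ 2 * q ^ 2"
    by (simp add: eval_nat_numeral)
  also have "\<dots> = 1"
    using assms(1) by (simp flip: power_mult_distrib)
  finally show False using assms(2) by simp
qed

lemma actB_basis_vec_0: "actB q a b c lam (m 0) = (\<lambda>i. thetas q b lam 0 * m 0 i)"
  by (rule ext) (simp add: actB_def basis_vec_def)

lemma actB_actA_basis_vec_0:
  "(\<lambda>i. (let w = actA q a lam (m 0) in actB q a b c lam w i - k * w i) - e * m 0 i)
   = (\<lambda>i. (theta q a lam 0 * (thetas q b lam 0 - k) + phi q a b c lam 1 - e) * m 0 i
          + (thetas q b lam 1 - k) * m 1 i)"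
proof (rule ext)
  fix i :: nat
  show "(let w = actA q a lam (m 0) in actB q a b c lam w i - k * w i) - e * m 0 i
   = (theta q a lam 0 * (thetas q b lam 0 - k) + phi q a b c lam 1 - e) * m 0 i
          + (thetas q b lam 1 - k) * m 1 i"
    by (cases "i = 0"; cases "i = 1")
       (auto simp: actA_def actB_def basis_vec_def Let_def algebra_simps)
qed

lemma thetas_0_eq:
  fixes b lam :: "'a::field"
  assumes "b \<noteq> 0" and "lam \<noteq> 0"
  shows "thetas q b lam 0 = b / lam + inverse (b / lam)"
    and "thetas q b lam 0 = lam / b + inverse (lam / b)"
  using assms by (simp_all add: thetas_def field_simps)

lemma thetas_1_eq:
  fixes q b lam :: "'a::field"
  assumes "q \<noteq> 0" and "b \<noteq> 0" and "lam \<noteq> 0"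
  shows "thetas q b lam 1 - (b / lam * q ^ 2 + inverse (b / lam) * inverse q ^ 2) = 0"
    and "thetas q b lam 1 - (lam / b * q ^ 2 + inverse (lam / b) * inverse q ^ 2)
         = (b / lam - lam / b) * (q ^ 2 - inverse q ^ 2)"
  using assms by (simp_all add: thetas_def field_simps eval_nat_numeral)

lemma marginal_weight_quot_basis_vec_0_iff:
  assumes "thetas q b lam 0 = mu + inverse mu" and "m 0 \<notin> U" and "(\<lambda>_. 0) \<in> U"
  shows "marginal_weight_quot q a b c lam U mu (m 0) \<longleftrightarrow>
    (\<exists>e. (\<lambda>i. e * m 0 i
              + (thetas q b lam 1 - (mu * q ^ 2 + inverse mu * inverse q ^ 2)) * m 1 i) \<in> U)"
    (is "_ \<longleftrightarrow> (\<exists>e. ?comb e \<in> U)")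
proof -
  have shift: "(\<exists>e. P (x - e)) \<longleftrightarrow> (\<exists>e. P e)" for P :: "'a \<Rightarrow> bool" and x :: 'a
  proof
    assume "\<exists>e. P (x - e)"
    then show "\<exists>e. P e" by blast
  next
    assume "\<exists>e. P e"
    then obtain e where "P e" ..
    then have "P (x - (x - e))" by simp
    then show "\<exists>e. P (x - e)" ..
  qed
  define x where "x = theta q a lam 0 * (thetas q b lam 0 - (mu * q ^ 2 + inverse mu * inverse q ^ 2))
    + phi q a b c lam 1"
  have "(\<lambda>i. actB q a b c lam (m 0) i - (mu + inverse mu) * m 0 i) = (\<lambda>_. 0)"
    using assms(1) by (simp add: actB_basis_vec_0)
  then have "marginal_weight_quot q a b c lam U mu (m 0) \<longleftrightarrow> (\<exists>e. ?comb (x - e) \<in> U)"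
    using assms(2,3) by (simp add: marginal_weight_quot_def actB_actA_basis_vec_0 x_def)
  also have "\<dots> \<longleftrightarrow> (\<exists>e. ?comb e \<in> U)"
    by (rule shift)
  finally show ?thesis .
qed

lemma combination_in_iff_lin_dep_quot:
  fixes U :: "(nat \<Rightarrow> 'a::field) set"
  assumes "(\<lambda>_. 0) \<in> U" and scale: "\<forall>u\<in>U. \<forall>s. (\<lambda>i. s * u i) \<in> U" and "v \<notin> U"
  shows "(\<exists>e. (\<lambda>i. e * v i + d * w i) \<in> U) \<longleftrightarrow> d = 0 \<or> lin_dep_quot U v w"
proof
  assume "\<exists>e. (\<lambda>i. e * v i + d * w i) \<in> U"
  then show "d = 0 \<or> lin_dep_quot U v w"
    unfolding lin_dep_quot_def by blast
next
  assume "d = 0 \<or> lin_dep_quot U v w"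
  then consider "d = 0" | x y where "x \<noteq> 0 \<or> y \<noteq> 0" "(\<lambda>i. x * v i + y * w i) \<in> U"
    unfolding lin_dep_quot_def by blast
  then show "\<exists>e. (\<lambda>i. e * v i + d * w i) \<in> U"
  proof cases
    case 1
    then show ?thesis using assms(1) by (intro exI[of _ 0]) simp
  next
    case (2 x y)
    have "y \<noteq> 0"
    proof
      assume "y = 0"
      with 2 have "(\<lambda>i. inverse x * (x * v i)) \<in> U" and "x \<noteq> 0"
        using scale by auto
      moreover have "(\<lambda>i. inverse x * (x * v i)) = v"
        using \<open>x \<noteq> 0\<close> by (simp add: fun_eq_iff)
      ultimately show False using \<open>v \<notin> U\<close> by simp
    qed
    have "(\<lambda>i. d / y * (x * v i + y * w i)) \<in> U"
      using bspec[OF scale 2(2)] by blast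
    with \<open>y \<noteq> 0\<close> show ?thesis
      by (intro exI[of _ "d * x / y"]) (simp add: field_simps)
  qed
qed

theorem lemma3p5:
  fixes q a b c lam :: "'a::alg_closed_field"
    and U :: "(nat \<Rightarrow> 'a) set"
  assumes "root_of_unity q"
    and "unity_order q \<notin> {1, 2, 4}"
    and "a \<noteq> 0" and "b \<noteq> 0" and "c \<noteq> 0" and "lam \<noteq> 0"
    and "is_submodule q a b c lam U"
    and "m 0 \<notin> U"
  shows "marginal_weight_quot q a b c lam U (b / lam) (m 0) \<and>
         (marginal_weight_quot q a b c lam U (lam / b) (m 0) \<longleftrightarrow>
           (b / lam = lam / b \<or> lin_dep_quot U (m 0) (m 1)))"
proof -
  have "q \<noteq> 0" using assms(1) by (rule root_of_unity_nonzero)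
  have "q ^ 2 - inverse q ^ 2 \<noteq> 0"
    using \<open>q \<noteq> 0\<close> power_four_ne_one[OF assms(1,2)] by (rule square_ne_inverse_square)
  have zero: "(\<lambda>_. 0) \<in> U" and scale: "\<forall>u\<in>U. \<forall>s. (\<lambda>i. s * u i) \<in> U"
    using assms(7) unfolding is_submodule_def by simp_all
  note combination = combination_in_iff_lin_dep_quot[OF zero scale assms(8)]
  have "marginal_weight_quot q a b c lam U (b / lam) (m 0)"
    unfolding marginal_weight_quot_basis_vec_0_iff[OF thetas_0_eq(1)[OF assms(4,6)] assms(8) zero]
      thetas_1_eq(1)[OF \<open>q \<noteq> 0\<close> assms(4,6)]
    by (subst combination) (simp add: right_minus_eq)
  moreover have "marginal_weight_quot q a b c lam U (lam / b) (m 0) \<longleftrightarrow>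
      (b / lam = lam / b \<or> lin_dep_quot U (m 0) (m 1))"
    unfolding marginal_weight_quot_basis_vec_0_iff[OF thetas_0_eq(2)[OF assms(4,6)] assms(8) zero]
      thetas_1_eq(2)[OF \<open>q \<noteq> 0\<close> assms(4,6)]
    using \<open>q ^ 2 - inverse q ^ 2 \<noteq> 0\<close> by (subst combination) (simp add: right_minus_eq)
  ultimately show ?thesis ..
qed

end
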